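(* Let $I$ be a finite set and let $g_\bullet\colon\mathbb{Z}\to\mathbb{Z}$ be a gp map parametrised by $\mathbb{R}^I$. Then there exist finite sets $J,K$ and a gp map $\tilde g_\bullet\colon\mathbb{Z}\to\mathbb{Z}$ parametrised by $\mathbb{Z}^J\times[0,1)^K$ such that $\tilde g_\bullet$ extends $g_\bullet$ and $\tilde g_\bullet$ takes the form \[ \tilde g_{a,\beta} = \sum_{j\in J} a_j h^{(j)}_{\beta},\qquad a\in\mathbb{Z}^J,\ \beta\in[0,1)^K, \] where for each $j\in J$, $h^{(j)}_\bullet\colon\mathbb{Z}\to\mathbb{Z}$ is a gp map parametrised by $[0,1)^K$.
   Context: A generalised polynomial (gp) map $\mathbb{R}^d\to\mathbb{R}$ is an element of the smallest family containing all polynomial maps and closed under pointwise sum, pointwise product and pointwise integer part $\lfloor\cdot\rfloor$; a map $\mathbb{R}^d\to\mathbb{R}^m$ is gp if each coordinate is. For pairwise disjoint finite sets $I_r,I_i,I_f$ and $\Omega = \mathbb{R}^{I_r}\times\mathbb{Z}^{I_i}\times[0,1)^{I_f}$, a gp map $\mathbb{Z}\to\mathbb{Z}$ parametrised by $\Omega$ is a family $(g_\alpha)_{\alpha\in\Omega}$ of maps $\mathbb{Z}\to\mathbb{Z}$ such that $(\alpha,n)\mapsto g_\alpha(n)$ is the restriction to $\Omega\times\mathbb{Z}$ of a gp map $\mathbb{R}^{I_r\cup I_i\cup I_f}\times\mathbb{R}\to\mathbb{R}$. If $g_\bullet$ is parametrised by $\Omega$ and $h_\bullet$ by $\Omega'=\mathbb{R}^{J_r}\times\mathbb{Z}^{J_i}\times[0,1)^{J_f}$,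 we say $h_\bullet$ extends $g_\bullet$ if there is a gp map $\varphi\colon\mathbb{R}^{I_r\cup I_i\cup I_f}\to\mathbb{R}^{J_r\cup J_i\cup J_f}$ with $\varphi(\Omega)\subset\Omega'$ and $g_\alpha = h_{\varphi(\alpha)}$ for all $\alpha\in\Omega$. *)

theory Defs
  imports Complex_Main
begin

inductive gp_on :: "'v set \<Rightarrow> (('v \<Rightarrow> real) \<Rightarrow> real) \<Rightarrow> bool" for V where
  gp_const: "gp_on V (\<lambda>x. c)"
| gp_proj: "v \<in> V \<Longrightarrow> gp_on V (\<lambda>x. x v)"
| gp_add: "gp_on V f \<Longrightarrow> gp_on V g \<Longrightarrow> gp_on V (\<lambda>x. f x + g x)"
| gp_mult: "gp_on V f \<Longrightarrow> gp_on V g \<Longrightarrow> gp_on V (\<lambda>x. f x * g x)"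
| gp_floor: "gp_on V f \<Longrightarrow> gp_on V (\<lambda>x. real_of_int \<lfloor>f x\<rfloor>)"

text \<open>Parameter space \<open>\<real>^Ir \<times> \<int>^Ii \<times> [0,1)^If0\<close>, coordinates indexed by naturals;
  coordinates outside \<open>Ir \<union> Ii \<union> If0\<close> are normalised to 0.\<close>
definition Omega :: "nat set \<Rightarrow> nat set \<Rightarrow> nat set \<Rightarrow> (nat \<Rightarrow> real) set" where
  "Omega Ir Ii If0 = {\<alpha>. (\<forall>i\<in>Ii. \<alpha> i \<in> \<int>) \<and> (\<forall>i\<in>If0. 0 \<le> \<alpha> i \<and> \<alpha> i < 1)
      \<and> (\<forall>i. i \<notin> Ir \<union> Ii \<union> If0 \<longrightarrow> \<alpha> i = 0)}"

text \<open>The joint map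
  \<open>(\<alpha>,n) \<mapsto> g \<alpha> n\<close> is the restriction of a gp map in the variables
  \<open>Some i\<close> (\<open>i \<in> Ir \<union> Ii \<union> If0\<close>) and \<open>None\<close> (the variable \<open>n\<close>).\<close>
definition param_gp :: "nat set \<Rightarrow> nat set \<Rightarrow> nat set \<Rightarrow> ((nat \<Rightarrow> real) \<Rightarrow> int \<Rightarrow> int) \<Rightarrow> bool" where
  "param_gp Ir Ii If0 g \<longleftrightarrow>
     finite Ir \<and> finite Ii \<and> finite If0 \<and> Ir \<inter> Ii = {} \<and> Ir \<inter> If0 = {} \<and> Ii \<inter> If0 = {} \<and>
     (\<exists>G. gp_on (insert None (Some ` (Ir \<union> Ii \<union> If0))) G \<and>
        (\<forall>\<alpha>\<in>Omega Ir Ii If0. \<forall>n::int.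
           real_of_int (g \<alpha> n) = G (\<lambda>v. case v of None \<Rightarrow> real_of_int n | Some i \<Rightarrow> \<alpha> i)))"

definition extends_gp ::
  "nat set \<Rightarrow> nat set \<Rightarrow> nat set \<Rightarrow> ((nat \<Rightarrow> real) \<Rightarrow> int \<Rightarrow> int) \<Rightarrow>
   nat set \<Rightarrow> nat set \<Rightarrow> nat set \<Rightarrow> ((nat \<Rightarrow> real) \<Rightarrow> int \<Rightarrow> int) \<Rightarrow> bool" where
  "extends_gp Jr Ji Jf0 h Ir Ii If0 g \<longleftrightarrow>
     (\<exists>\<phi> :: (nat \<Rightarrow> real) \<Rightarrow> (nat \<Rightarrow> real).
        (\<forall>j \<in> Jr \<union> Ji \<union> Jf0. gp_on (Ir \<union> Ii \<union> If0) (\<lambda>\<alpha>. \<phi> \<alpha> j)) \<and>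
        \<phi> ` Omega Ir Ii If0 \<subseteq> Omega Jr Ji Jf0 \<and>
        (\<forall>\<alpha>\<in>Omega Ir Ii If0. g \<alpha> = h (\<phi> \<alpha>)))"

end

theory Submission
  imports Defs
begin

text \<open>Every gp function \<open>F(n, \<alpha>)\<close> can be written as \<open>\<Sum>\<^sub>t c\<^sub>t(\<alpha>) q\<^sub>t(n, {b(\<alpha>)})\<close>, where the
  coefficients \<open>c\<^sub>t\<close> and the finitely many \<open>b\<close> are gp functions of \<open>\<alpha>\<close> alone and the \<open>q\<^sub>t\<close> are
  integer-valued gp functions of \<open>n\<close> and of the fractional parts \<open>{b(\<alpha>)}\<close>. This shape is stable
  under sums and products, and under the integer part: from \<open>c\<^sub>t = \<lfloor>c\<^sub>t\<rfloor> + {c\<^sub>t}\<close> we get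
  \<open>\<lfloor>F\<rfloor> = \<Sum>\<^sub>t \<lfloor>c\<^sub>t\<rfloor> q\<^sub>t + \<lfloor>\<Sum>\<^sub>t {c\<^sub>t} q\<^sub>t\<rfloor>\<close>, and the last summand has the same shape, with the
  \<open>{c\<^sub>t}\<close> as new fractional variables. Applied to \<open>g = \<lfloor>g\<rfloor>\<close>, all coefficients become integers;
  sending \<open>\<alpha>\<close> to the integers \<open>\<lfloor>c\<^sub>t(\<alpha>)\<rfloor>\<close> and the fractional parts \<open>{b(\<alpha>)}\<close> is the required
  gp reparametrisation.\<close>

lemma gp_on_mono: "gp_on V f \<Longrightarrow> V \<subseteq> W \<Longrightarrow> gp_on W f"
  by (induction rule: gp_on.induct) (auto intro: gp_on.intros)

lemma gp_on_rename: "gp_on V f \<Longrightarrow> gp_on (r ` V) (\<lambda>x. f (x \<circ> r))"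
proof (induction rule: gp_on.induct)
  case (gp_proj v)
  then show ?case using gp_on.gp_proj[of "r v" "r ` V"] by simp
qed (auto intro: gp_on.intros)

lemma gp_on_cong: "gp_on V f \<Longrightarrow> (\<And>v. v \<in> V \<Longrightarrow> x v = y v) \<Longrightarrow> f x = f y"
  by (induction rule: gp_on.induct) auto

lemma gp_on_sum: "finite S \<Longrightarrow> (\<And>s. s \<in> S \<Longrightarrow> gp_on V (f s)) \<Longrightarrow> gp_on V (\<lambda>x. \<Sum>s\<in>S. f s x)"
  by (induction S rule: finite_induct) (auto intro: gp_on.intros)

lemma gp_on_sum_list: "(\<And>s. s \<in> set xs \<Longrightarrow> gp_on V (f s)) \<Longrightarrow> gp_on V (\<lambda>x. \<Sum>s\<leftarrow>xs. f s x)"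
  by (induction xs) (auto intro: gp_on.intros)

lemma gp_on_frac: "gp_on V f \<Longrightarrow> gp_on V (\<lambda>x. frac (f x))"
proof -
  assume "gp_on V f"
  then have "gp_on V (\<lambda>x. f x + (-1) * real_of_int \<lfloor>f x\<rfloor>)"
    by (intro gp_on.intros)
  then show ?thesis by (simp add: frac_def)
qed

lemma sum_list_map_mult:
  fixes f g :: "_ \<Rightarrow> 'a::semiring_0"
  shows "(\<Sum>x\<leftarrow>xs. f x) * (\<Sum>y\<leftarrow>ys. g y) = (\<Sum>(x, y)\<leftarrow>List.product xs ys. f x * g y)"
  by (induction xs) (auto simp: sum_list_const_mult distrib_right o_def)

lemma Ints_sum_list: "(\<And>x. x \<in> set xs \<Longrightarrow> f x \<in> \<int>) \<Longrightarrow> (\<Sum>x\<leftarrow>xs. f x) \<in> \<int>"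
  by (induction xs) auto

type_synonym coeff = "(nat \<Rightarrow> real) \<Rightarrow> real"

definition frac_env :: "(nat \<Rightarrow> real) \<Rightarrow> int \<Rightarrow> coeff option \<Rightarrow> real" where
  "frac_env \<alpha> n = case_option (of_int n) (\<lambda>c. frac (c \<alpha>))"

definition int_valued :: "(('v option \<Rightarrow> real) \<Rightarrow> real) \<Rightarrow> bool" where
  "int_valued q \<longleftrightarrow> (\<forall>x. x None \<in> \<int> \<longrightarrow> q x \<in> \<int>)"

text \<open>\<open>frac_decomposition I M F L\<close> expresses \<open>F(n, \<alpha>)\<close> as the sum over \<open>(c, q) \<in> L\<close> of
  \<open>c(\<alpha>) q(n, \<beta>)\<close> with \<open>\<beta> c' = frac (c' \<alpha>)\<close> for \<open>c' \<in> M\<close>: the fractional-part variables of \<open>q\<close>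
  are indexed by the coefficient functions themselves.\<close>

definition frac_decomposition ::
  "nat set \<Rightarrow> coeff set \<Rightarrow> ((nat option \<Rightarrow> real) \<Rightarrow> real) \<Rightarrow>
   (coeff \<times> ((coeff option \<Rightarrow> real) \<Rightarrow> real)) list \<Rightarrow> bool" where
  "frac_decomposition I M F L \<longleftrightarrow> finite M \<and> (\<forall>c\<in>M. gp_on I c) \<and>
     (\<forall>(c, q)\<in>set L. gp_on I c \<and> gp_on (insert None (Some ` M)) q \<and> int_valued q) \<and>
     (\<forall>\<alpha> n. F (case_option (of_int n) \<alpha>) = (\<Sum>(c, q)\<leftarrow>L. c \<alpha> * q (frac_env \<alpha> n)))"

lemma frac_decomposition_const: "frac_decomposition I {} (\<lambda>x. a) [(\<lambda>\<alpha>. a, \<lambda>x. 1)]"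
  by (auto simp: frac_decomposition_def int_valued_def intro: gp_on.intros)

lemma frac_decomposition_proj_None: "frac_decomposition I {} (\<lambda>x. x None) [(\<lambda>\<alpha>. 1, \<lambda>x. x None)]"
  by (auto simp: frac_decomposition_def int_valued_def frac_env_def intro: gp_on.intros)

lemma frac_decomposition_proj_Some:
  "i \<in> I \<Longrightarrow> frac_decomposition I {} (\<lambda>x. x (Some i)) [(\<lambda>\<alpha>. \<alpha> i, \<lambda>x. 1)]"
  by (auto simp: frac_decomposition_def int_valued_def intro: gp_on.intros)

lemma frac_decomposition_mono:
  assumes "frac_decomposition I M F L" "M \<subseteq> M'" "finite M'" "\<forall>c\<in>M'. gp_on I c"
  shows "frac_decomposition I M' F L"
proof -
  have "insert None (Some ` M) \<subseteq> insert None (Some ` M')" using assms(2) by auto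
  with assms show ?thesis by (fastforce simp: frac_decomposition_def intro: gp_on_mono)
qed

lemma frac_decomposition_Un:
  assumes "frac_decomposition I M1 F L1" "frac_decomposition I M2 G L2"
  shows "frac_decomposition I (M1 \<union> M2) F L1" "frac_decomposition I (M1 \<union> M2) G L2"
proof -
  have "finite (M1 \<union> M2)" "\<forall>c\<in>M1 \<union> M2. gp_on I c"
    using assms by (auto simp: frac_decomposition_def)
  then show "frac_decomposition I (M1 \<union> M2) F L1" "frac_decomposition I (M1 \<union> M2) G L2"
    using assms by (auto intro: frac_decomposition_mono)
qed

lemma frac_decomposition_add:
  assumes "frac_decomposition I M1 F L1" "frac_decomposition I M2 G L2"
  shows "frac_decomposition I (M1 \<union> M2) (\<lambda>x. F x + G x) (L1 @ L2)"
  using frac_decomposition_Un[OF assms] by (auto simp: frac_decomposition_def)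

lemma frac_decomposition_mult:
  assumes "frac_decomposition I M1 F L1" "frac_decomposition I M2 G L2"
  shows "frac_decomposition I (M1 \<union> M2) (\<lambda>x. F x * G x)
           (map (\<lambda>((c, q), (d, p)). (\<lambda>\<alpha>. c \<alpha> * d \<alpha>, \<lambda>x. q x * p x)) (List.product L1 L2))"
proof -
  note F = frac_decomposition_Un(1)[OF assms] and G = frac_decomposition_Un(2)[OF assms]
  have "F (case_option (of_int n) \<alpha>) * G (case_option (of_int n) \<alpha>) =
      (\<Sum>((c, q), (d, p))\<leftarrow>List.product L1 L2. c \<alpha> * d \<alpha> * (q (frac_env \<alpha> n) * p (frac_env \<alpha> n)))"
    for \<alpha> n
    using F G by (simp add: frac_decomposition_def sum_list_map_mult split_def mult_ac)
  with F G show ?thesis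
    by (auto simp: frac_decomposition_def int_valued_def o_def split_def
        intro: gp_on.intros Ints_mult)
qed

lemma frac_decomposition_floor:
  assumes dec: "frac_decomposition I M F L"
  shows "\<exists>M' L'. frac_decomposition I M' (\<lambda>x. of_int \<lfloor>F x\<rfloor>) L' \<and> (\<forall>(c, q)\<in>set L'. \<forall>\<alpha>. c \<alpha> \<in> \<int>)"
proof -
  define M' where "M' = M \<union> fst ` set L"
  define L' :: "(coeff \<times> ((coeff option \<Rightarrow> real) \<Rightarrow> real)) list"
    where "L' = map (\<lambda>(c, q). (\<lambda>\<alpha>. of_int \<lfloor>c \<alpha>\<rfloor>, q)) L @
    [(\<lambda>\<alpha>. 1, \<lambda>x. of_int \<lfloor>\<Sum>(c, q)\<leftarrow>L. x (Some c) * q x\<rfloor>)]"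
  have terms: "\<And>c q. (c, q) \<in> set L \<Longrightarrow> gp_on I c \<and> gp_on (insert None (Some ` M)) q \<and> int_valued q"
    using dec by (auto simp: frac_decomposition_def)
  have M': "finite M'" "\<forall>c\<in>M'. gp_on I c"
    using dec terms by (auto simp: M'_def frac_decomposition_def)
  have gp_q: "gp_on (insert None (Some ` M')) q" if "(c, q) \<in> set L" for c q
    using terms[OF that] by (auto simp: M'_def elim!: gp_on_mono)
  \<comment> \<open>Split each coefficient into integer and fractional part; as the \<open>q\<close> are integral,
    only the fractional parts remain under the floor, where they become new variables.\<close>
  have floor_eq: "of_int \<lfloor>F (case_option (of_int n) \<alpha>)\<rfloor> =
      (\<Sum>(c, q)\<leftarrow>L'. c \<alpha> * q (frac_env \<alpha> n))" for \<alpha> n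
  proof -
    define x where "x = frac_env \<alpha> n"
    have q_int: "q x \<in> \<int>" if "(c, q) \<in> set L" for c q
      using terms[OF that] by (simp add: int_valued_def x_def frac_env_def)
    define A where "A = (\<Sum>(c, q)\<leftarrow>L. of_int \<lfloor>c \<alpha>\<rfloor> * q x)"
    have "F (case_option (of_int n) \<alpha>) = A + (\<Sum>(c, q)\<leftarrow>L. x (Some c) * q x)"
      using dec by (simp add: frac_decomposition_def A_def x_def frac_env_def frac_def
          sum_list_addf[symmetric] split_def algebra_simps)
    moreover have "A \<in> \<int>"
      unfolding A_def by (rule Ints_sum_list) (auto dest: q_int)
    ultimately show ?thesis
      by (auto simp: L'_def A_def x_def split_def o_def elim!: Ints_cases)
  qed
  have gp_new_term: "gp_on (insert None (Some ` M')) (\<lambda>x. \<Sum>(c, q)\<leftarrow>L. x (Some c) * q x)"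
  proof (rule gp_on_sum_list, clarify)
    fix c q assume cq: "(c, q) \<in> set L"
    then have "Some c \<in> insert None (Some ` M')"
      by (force simp: M'_def)
    with gp_q[OF cq] show "gp_on (insert None (Some ` M')) (\<lambda>x. x (Some c) * q x)"
      by (intro gp_on.intros)
  qed
  have "frac_decomposition I M' (\<lambda>x. of_int \<lfloor>F x\<rfloor>) L'"
    unfolding frac_decomposition_def
  proof (intro conjI)
    show "\<forall>(c, q)\<in>set L'. gp_on I c \<and> gp_on (insert None (Some ` M')) q \<and> int_valued q"
      using terms gp_q gp_new_term
      by (auto simp: L'_def int_valued_def intro: gp_on.intros)
  qed (use M' floor_eq in auto)
  moreover have "\<forall>(c, q)\<in>set L'. \<forall>\<alpha>. c \<alpha> \<in> \<int>"
    by (auto simp: L'_def)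
  ultimately show ?thesis by blast
qed

lemma gp_on_imp_frac_decomposition:
  "gp_on (insert None (Some ` I)) F \<Longrightarrow> \<exists>M L. frac_decomposition I M F L"
proof (induction rule: gp_on.induct)
  case (gp_const c)
  then show ?case using frac_decomposition_const by blast
next
  case (gp_proj v)
  then show ?case by (cases v) (fastforce intro: frac_decomposition_proj_None frac_decomposition_proj_Some)+
next
  case (gp_add F G)
  then show ?case using frac_decomposition_add by blast
next
  case (gp_mult F G)
  then show ?case using frac_decomposition_mult by blast
next
  case (gp_floor F)
  then show ?case using frac_decomposition_floor by blast
qed

lemma param_gp_floor_rename:
  assumes q: "gp_on (insert None (Some ` M)) q" and "finite K" "r ` M \<subseteq> K"
  shows "param_gp {} {} K (\<lambda>\<beta> n. \<lfloor>q (case_option (of_int n) (\<beta> \<circ> r))\<rfloor>)"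
proof -
  have "gp_on (map_option r ` insert None (Some ` M)) (\<lambda>x. q (x \<circ> map_option r))"
    using q by (rule gp_on_rename)
  then have "gp_on (insert None (Some ` K)) (\<lambda>x. of_int \<lfloor>q (x \<circ> map_option r)\<rfloor>)"
    using assms(3) by (auto simp: image_image elim!: gp_on_mono intro!: gp_on.gp_floor)
  moreover have "case_option a \<beta> \<circ> map_option r = case_option a (\<beta> \<circ> r)" for a :: real and \<beta>
    by (simp add: fun_eq_iff)
  ultimately show ?thesis
    using \<open>finite K\<close> unfolding param_gp_def by auto
qed

lemma param_gp_integer_combination:
  assumes "finite J" "finite K" "J \<inter> K = {}" "\<forall>j\<in>J. param_gp {} {} K (H j)"
  shows "param_gp {} J K (\<lambda>\<alpha> n. \<Sum>j\<in>J. \<lfloor>\<alpha> j\<rfloor> * H j (\<lambda>i. if i \<in> K then \<alpha> i else 0) n)"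
proof -
  have "\<forall>j\<in>J. \<exists>G. gp_on (insert None (Some ` K)) G \<and>
      (\<forall>\<beta>\<in>Omega {} {} K. \<forall>n. real_of_int (H j \<beta> n) = G (case_option (of_int n) \<beta>))"
    using assms(4) by (simp add: param_gp_def)
  then obtain G where G: "\<forall>j\<in>J. gp_on (insert None (Some ` K)) (G j) \<and>
      (\<forall>\<beta>\<in>Omega {} {} K. \<forall>n. real_of_int (H j \<beta> n) = G j (case_option (of_int n) \<beta>))"
    by (auto dest!: bchoice)
  have "gp_on (insert None (Some ` ({} \<union> J \<union> K))) (\<lambda>x. \<Sum>j\<in>J. x (Some j) * G j x)"
    using G \<open>finite J\<close> by (auto intro!: gp_on_sum gp_on.intros elim!: gp_on_mono)
  moreover have term_eq: "real_of_int (\<lfloor>\<alpha> j\<rfloor> * H j (\<lambda>i. if i \<in> K then \<alpha> i else 0) n) =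
      \<alpha> j * G j (case_option (of_int n) \<alpha>)" if "\<alpha> \<in> Omega {} J K" "j \<in> J" for \<alpha> n j
  proof -
    have "G j (case_option (of_int n) (\<lambda>i. if i \<in> K then \<alpha> i else 0)) =
        G j (case_option (of_int n) \<alpha>)"
      using G \<open>j \<in> J\<close> by (auto elim!: gp_on_cong split: option.split)
    moreover have "(\<lambda>i. if i \<in> K then \<alpha> i else 0) \<in> Omega {} {} K" "\<alpha> j \<in> \<int>"
      using that by (auto simp: Omega_def)
    ultimately show ?thesis
      using G \<open>j \<in> J\<close> by (auto elim!: Ints_cases)
  qed
  ultimately show ?thesis
    using assms(1-3) unfolding param_gp_def by (auto simp: of_int_sum intro!: sum.cong)
qed

lemma frac_decomposition_nth:
  assumes "frac_decomposition I M F L" "j < length L"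
  shows "gp_on I (fst (L ! j))" "gp_on (insert None (Some ` M)) (snd (L ! j))"
    "int_valued (snd (L ! j))"
  using assms nth_mem[OF assms(2)] by (auto simp: frac_decomposition_def split_def)

lemma frac_decomposition_eval_floor:
  assumes dec: "frac_decomposition I M F L"
    and int_coeffs: "\<forall>(c, q)\<in>set L. \<forall>\<alpha>. c \<alpha> \<in> \<int>"
    and \<beta>: "\<forall>c\<in>M. \<beta> (r c) = frac (c \<alpha>)"
  shows "F (case_option (of_int n) \<alpha>) = real_of_int
    (\<Sum>j<length L. \<lfloor>fst (L ! j) \<alpha>\<rfloor> * \<lfloor>snd (L ! j) (case_option (of_int n) (\<beta> \<circ> r))\<rfloor>)"
proof -
  have "real_of_int (\<lfloor>fst (L ! j) \<alpha>\<rfloor> * \<lfloor>snd (L ! j) (case_option (of_int n) (\<beta> \<circ> r))\<rfloor>) =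
      fst (L ! j) \<alpha> * snd (L ! j) (frac_env \<alpha> n)" if "j < length L" for j
  proof -
    have "snd (L ! j) (case_option (of_int n) (\<beta> \<circ> r)) = snd (L ! j) (frac_env \<alpha> n)"
      using frac_decomposition_nth(2)[OF dec that] \<beta>
      by (auto simp: frac_env_def elim!: gp_on_cong)
    moreover have "snd (L ! j) (frac_env \<alpha> n) \<in> \<int>"
      using frac_decomposition_nth(3)[OF dec that] by (simp add: int_valued_def frac_env_def)
    moreover have "fst (L ! j) \<alpha> \<in> \<int>"
      using bspec[OF int_coeffs nth_mem[OF that]] by (simp add: split_def)
    ultimately show ?thesis
      by (auto elim!: Ints_cases)
  qed
  moreover have "F (case_option (of_int n) \<alpha>) =
      (\<Sum>j<length L. fst (L ! j) \<alpha> * snd (L ! j) (frac_env \<alpha> n))"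
    using dec by (simp add: frac_decomposition_def sum_list_sum_nth atLeast0LessThan split_def)
  ultimately show ?thesis
    by (simp add: of_int_sum del: of_int_mult)
qed

lemma extends_gp_frac_decomposition:
  assumes dec: "frac_decomposition I M F L"
    and int_coeffs: "\<forall>(c, q)\<in>set L. \<forall>\<alpha>. c \<alpha> \<in> \<int>"
    and g: "\<forall>\<alpha>\<in>Omega I {} {}. \<forall>n. real_of_int (g \<alpha> n) = F (case_option (of_int n) \<alpha>)"
    and r: "inj_on r M" "\<forall>c\<in>M. length L \<le> r c"
  shows "extends_gp {} {..<length L} (r ` M)
    (\<lambda>\<alpha> n. \<Sum>j\<in>{..<length L}. \<lfloor>\<alpha> j\<rfloor> *
       \<lfloor>snd (L ! j) (case_option (of_int n) ((\<lambda>i. if i \<in> r ` M then \<alpha> i else 0) \<circ> r))\<rfloor>)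
    I {} {} g"
proof -
  define K where "K = r ` M"
  define \<phi> where "\<phi> \<alpha> k = (if k < length L then fst (L ! k) \<alpha>
      else if k \<in> K then frac (the_inv_into M r k \<alpha>) else 0)" for \<alpha> k
  have K_ge: "length L \<le> k" if "k \<in> K" for k
    using that r(2) by (auto simp: K_def)
  have \<phi>_frac: "\<phi> \<alpha> (r c) = frac (c \<alpha>)" if "c \<in> M" for \<alpha> c
    using that r by (auto simp: \<phi>_def K_def the_inv_into_f_f)
  have gp_\<phi>: "gp_on I (\<lambda>\<alpha>. \<phi> \<alpha> k)" if "k \<in> {..<length L} \<union> K" for k
  proof (cases "k < length L")
    case True
    then show ?thesis using frac_decomposition_nth(1)[OF dec] by (simp add: \<phi>_def)
  next
    case False
    with that obtain c where "c \<in> M" "k = r c" by (auto simp: K_def)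
    then show ?thesis
      using dec \<phi>_frac by (auto simp: frac_decomposition_def intro!: gp_on_frac)
  qed
  have \<phi>_Omega: "\<phi> \<alpha> \<in> Omega {} {..<length L} K" for \<alpha>
  proof -
    have "\<phi> \<alpha> k \<in> \<int>" if "k < length L" for k
      using bspec[OF int_coeffs nth_mem[OF that]] that by (simp add: \<phi>_def split_def)
    moreover have "0 \<le> \<phi> \<alpha> k \<and> \<phi> \<alpha> k < 1" if "k \<in> K" for k
      using K_ge[OF that] that by (simp add: \<phi>_def frac_lt_1)
    ultimately show ?thesis by (auto simp: Omega_def \<phi>_def)
  qed
  have "g \<alpha> n = (\<Sum>j\<in>{..<length L}. \<lfloor>\<phi> \<alpha> j\<rfloor> *
       \<lfloor>snd (L ! j) (case_option (of_int n) ((\<lambda>i. if i \<in> K then \<phi> \<alpha> i else 0) \<circ> r))\<rfloor>)"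
    if "\<alpha> \<in> Omega I {} {}" for \<alpha> n
  proof -
    have "\<forall>c\<in>M. (if r c \<in> K then \<phi> \<alpha> (r c) else 0) = frac (c \<alpha>)"
      by (simp add: K_def \<phi>_frac)
    from frac_decomposition_eval_floor[OF dec int_coeffs, where \<beta> = "\<lambda>i. if i \<in> K then \<phi> \<alpha> i else 0", OF this]
    have "real_of_int (g \<alpha> n) = real_of_int (\<Sum>j<length L. \<lfloor>fst (L ! j) \<alpha>\<rfloor> *
        \<lfloor>snd (L ! j) (case_option (of_int n) ((\<lambda>i. if i \<in> K then \<phi> \<alpha> i else 0) \<circ> r))\<rfloor>)"
      using g that by (simp add: o_def)
    then show ?thesis
      by (simp only: of_int_eq_iff) (simp add: \<phi>_def)
  qed
  then show ?thesis
    unfolding extends_gp_def K_def[symmetric]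
    using gp_\<phi> \<phi>_Omega by (intro exI[of _ \<phi>]) (auto simp: fun_eq_iff)
qed

theorem proposition3p4:
  fixes I :: "nat set" and g :: "(nat \<Rightarrow> real) \<Rightarrow> int \<Rightarrow> int"
  assumes "finite I" and "param_gp I {} {} g"
  shows "\<exists>(J::nat set) (K::nat set) (h :: (nat \<Rightarrow> real) \<Rightarrow> int \<Rightarrow> int)
            (H :: nat \<Rightarrow> (nat \<Rightarrow> real) \<Rightarrow> int \<Rightarrow> int).
           finite J \<and> finite K \<and> J \<inter> K = {} \<and>
           param_gp {} J K h \<and>
           extends_gp {} J K h I {} {} g \<and>
           (\<forall>j\<in>J. param_gp {} {} K (H j)) \<and>
           (\<forall>\<alpha>\<in>Omega {} J K. \<forall>n.
              h \<alpha> n = (\<Sum>j\<in>J. \<lfloor>\<alpha> j\<rfloor> * H j (\<lambda>i. if i \<in> K then \<alpha> i else 0) n))"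
proof -
  obtain G where G: "gp_on (insert None (Some ` I)) G"
    and g: "\<forall>\<alpha>\<in>Omega I {} {}. \<forall>n. real_of_int (g \<alpha> n) = G (case_option (of_int n) \<alpha>)"
    using assms(2) by (auto simp: param_gp_def)
  then have g_floor: "\<forall>\<alpha>\<in>Omega I {} {}. \<forall>n. real_of_int (g \<alpha> n) = of_int \<lfloor>G (case_option (of_int n) \<alpha>)\<rfloor>"
    by (metis floor_of_int)
  obtain M L where dec: "frac_decomposition I M (\<lambda>x. of_int \<lfloor>G x\<rfloor>) L"
    and int_coeffs: "\<forall>(c, q)\<in>set L. \<forall>\<alpha>. c \<alpha> \<in> \<int>"
    using gp_on_imp_frac_decomposition[OF G] frac_decomposition_floor by blast
  have "finite M"
    using dec by (simp add: frac_decomposition_def)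
  then obtain f :: "coeff \<Rightarrow> nat" where "inj_on f M"
    using finite_imp_inj_to_nat_seg by blast
  define r where "r c = length L + f c" for c
  define J where "J = {..<length L}"
  define K where "K = r ` M"
  define H where "H = (\<lambda>j \<beta> n. \<lfloor>snd (L ! j) (case_option (of_int n) (\<beta> \<circ> r))\<rfloor>)"
  have JK: "finite J" "finite K" "J \<inter> K = {}"
    using \<open>finite M\<close> by (auto simp: J_def K_def r_def)
  have H: "\<forall>j\<in>J. param_gp {} {} K (H j)"
    using frac_decomposition_nth(2)[OF dec] \<open>finite K\<close>
    by (auto simp: H_def J_def K_def intro!: param_gp_floor_rename)
  have "extends_gp {} J K (\<lambda>\<alpha> n. \<Sum>j\<in>J. \<lfloor>\<alpha> j\<rfloor> * H j (\<lambda>i. if i \<in> K then \<alpha> i else 0) n) I {} {} g"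
    unfolding J_def K_def H_def
    using dec int_coeffs g_floor \<open>inj_on f M\<close>
    by (intro extends_gp_frac_decomposition) (auto simp: r_def inj_on_def)
  with JK H param_gp_integer_combination[OF JK H] show ?thesis
    by blast
qed

end
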